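(* Let $V:\mathbb{R}^n\times\mathbb{R}^{p,q}\to\mathbb{R}$ be a generalized discrete-time control Lyapunov function (g-dclf) of order $m$ for the control system $x^{k+1}=f(x^k,u^k)$, with associated function $\alpha$ and weights $\sigma_1,\dots,\sigma_m$. Then for any $(x^0,\mathbf{u}_{[0:q-1]})\in\mathbb{R}^n\times\mathbf{U}_{[0:q-1]}(x^0)$ there exists a control sequence $\boldsymbol{\nu}_{[0:q+m-1]}$, steering $x^0$ to states $x^1,\dots,x^m$ via $x^{j+1}=f(x^j,\nu_j)$, such that $$V(x^l,\boldsymbol{\nu}_{[l:q+l-1]})-V(x^0,\mathbf{u}_{[0:q-1]})\le-\alpha(x^0,\mathbf{u}_{[0:q-1]})$$ holds for some $l\in\{1,\dots,m\}$ with $\boldsymbol{\nu}_{[l:q+l-1]}\in\mathbf{U}_{[0:q-1]}(x^l)$.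
   Context: System: $x^{k+1}=f(x^k,u^k)$, $k\in\mathbb{N}$, with state constraint set $X\subseteq\mathbb{R}^n$, input constraint set $U\subseteq\mathbb{R}^p$, $0\in\operatorname{int}X$, $0\in\operatorname{int}U$, $f:X\times U\to\mathbb{R}^n$ continuous, $f(0,0)=0$. For a sequence $\mathbf{u}=[u_0,\dots,u_{N-1}]\in\mathbb{R}^{p,N}$, $\mathbf{u}_{[i:j]}$ denotes the subsequence $[u_i,\dots,u_j]$. Set of feasible controls: for $x\in X$, $\mathbf{U}_{[0:N-1]}(x)$ is the set of $\mathbf{u}_{[0:N-1]}\in\mathbb{R}^{p,N}$ such that, with $x^0=x$, $u_j\in U$ and $x^{j+1}=f(x^j,u_j)\in X$ for $j=0,\dots,N-1$. Norms of pairs $(x,\mathbf{u})$ are Euclidean norms of $[x^T,\mathrm{vec}(\mathbf{u})^T]$; positive definite means zero exactly at the origin and positive elsewhere; radially unbounded means $\to\infty$ as the norm $\to\infty$. g-dclf of order $m$ ($m\ge1$, $q\in\mathbb{N}$): a continuous positive definite $V:\mathbb{R}^n\times\mathbb{R}^{p,q}\to\mathbb{R}$ such that there are weights $\sigma_1,\dots,\sigma_m\ge0$ with $\frac{\sigma_1+\dots+\sigma_m}{m}-1\ge0$ and: if $q=0$ ($V$ depends only on $x$): (i) there is a continuous, radially unbounded, positive definite $\alpha:\mathbb{R}^n\to\mathbb{R}$ with $V(x^0)\ge\alpha(x^0)$ for all $x^0$; (ii) for every $x^0$ there is $\boldsymbol{\nu}_{[0:m-1]}\in\mathbf{U}_{[0:m-1]}(x^0)$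 steering $x^0$ to $x^1,\dots,x^m$ with $\frac{1}{m}\sum_{i=1}^m\sigma_iV(x^i)-V(x^0)\le-\alpha(x^0)$. If $q\neq0$: (i') there is a continuous, radially unbounded, positive definite $\alpha:\mathbb{R}^n\times\mathbb{R}^{p,q}\to\mathbb{R}$ with $V(x^0,\mathbf{u}_{[0:q-1]})\ge\alpha(x^0,\mathbf{u}_{[0:q-1]})$ for all $(x^0,\mathbf{u}_{[0:q-1]})\in\mathbb{R}^n\times\mathbf{U}_{[0:q-1]}(x^0)$; (ii') for every such $(x^0,\mathbf{u}_{[0:q-1]})$ there is $\boldsymbol{\nu}_{[0:q+m-1]}\in\mathbb{R}^{p,q+m}$ with $\boldsymbol{\nu}_{[l:q+l-1]}\in\mathbf{U}_{[0:q-1]}(x^l)$ for each $l\in\{0,\dots,m\}$, steering $x^0$ to $x^1,\dots,x^m$ (via $x^{j+1}=f(x^j,\nu_j)$), with $\frac{1}{m}\sum_{i=1}^m\sigma_iV(x^i,\boldsymbol{\nu}_{[i:q+i-1]})-V(x^0,\mathbf{u}_{[0:q-1]})\le-\alpha(x^0,\mathbf{u}_{[0:q-1]})$. (For $q=0$ read the pair $(x,\mathbf{u})$ as just $x$.) *)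

theory Defs
  imports "HOL-Analysis.Analysis"
begin

text \<open>States are vectors in real^'n, inputs vectors in real^'p.
  A finite input sequence of length q is encoded as a function nat => real^'p
  whose entries at indices >= q are zero (the "q-sequences").\<close>

definition qseqs :: "nat \<Rightarrow> (nat \<Rightarrow> real^'p) set" where
  "qseqs q = {u. \<forall>i\<ge>q. u i = 0}"

definition dom_q :: "nat \<Rightarrow> ((real^'n) \<times> (nat \<Rightarrow> real^'p)) set" where
  "dom_q q = UNIV \<times> qseqs q"

definition pnorm :: "nat \<Rightarrow> real^'n \<Rightarrow> (nat \<Rightarrow> real^'p) \<Rightarrow> real" where
  "pnorm q x u = sqrt ((norm x)\<^sup>2 + (\<Sum>i<q. (norm (u i))\<^sup>2))"

definition seg :: "nat \<Rightarrow> nat \<Rightarrow> (nat \<Rightarrow> real^'p) \<Rightarrow> (nat \<Rightarrow> real^'p)" where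
  "seg q l \<nu> = (\<lambda>i. if i < q then \<nu> (l + i) else 0)"

primrec traj :: "(real^'n \<Rightarrow> real^'p \<Rightarrow> real^'n) \<Rightarrow> real^'n \<Rightarrow> (nat \<Rightarrow> real^'p) \<Rightarrow> nat \<Rightarrow> real^'n" where
  "traj f x \<nu> 0 = x"
| "traj f x \<nu> (Suc j) = f (traj f x \<nu> j) (\<nu> j)"

definition feasU :: "(real^'n \<Rightarrow> real^'p \<Rightarrow> real^'n) \<Rightarrow> (real^'n) set \<Rightarrow> (real^'p) set
    \<Rightarrow> nat \<Rightarrow> real^'n \<Rightarrow> (nat \<Rightarrow> real^'p) \<Rightarrow> bool" where
  "feasU f X U N x u \<longleftrightarrow> x \<in> X \<and> (\<forall>j<N. u j \<in> U \<and> traj f x u (Suc j) \<in> X)"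

definition pos_def_q :: "nat \<Rightarrow> (real^'n \<Rightarrow> (nat \<Rightarrow> real^'p) \<Rightarrow> real) \<Rightarrow> bool" where
  "pos_def_q q g \<longleftrightarrow> (\<forall>(x,u)\<in>dom_q q. (g x u = 0 \<longleftrightarrow> x = 0 \<and> u = (\<lambda>_. 0)) \<and> g x u \<ge> 0)"

definition rad_unb_q :: "nat \<Rightarrow> (real^'n \<Rightarrow> (nat \<Rightarrow> real^'p) \<Rightarrow> real) \<Rightarrow> bool" where
  "rad_unb_q q g \<longleftrightarrow> (\<forall>M. \<exists>R. \<forall>(x,u)\<in>dom_q q. pnorm q x u > R \<longrightarrow> g x u > M)"

definition cont_q :: "nat \<Rightarrow> (real^'n \<Rightarrow> (nat \<Rightarrow> real^'p) \<Rightarrow> real) \<Rightarrow> bool" where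
  "cont_q q g \<longleftrightarrow> continuous_on (dom_q q) (\<lambda>(x,u). g x u)"

definition gdclf :: "(real^'n \<Rightarrow> real^'p \<Rightarrow> real^'n) \<Rightarrow> (real^'n) set \<Rightarrow> (real^'p) set
    \<Rightarrow> nat \<Rightarrow> nat \<Rightarrow> (real^'n \<Rightarrow> (nat \<Rightarrow> real^'p) \<Rightarrow> real)
    \<Rightarrow> (real^'n \<Rightarrow> (nat \<Rightarrow> real^'p) \<Rightarrow> real) \<Rightarrow> (nat \<Rightarrow> real) \<Rightarrow> bool" where
  "gdclf f X U q m V \<alpha> \<sigma> \<longleftrightarrow>
     m \<ge> 1 \<and> cont_q q V \<and> pos_def_q q V \<and>
     (\<forall>i\<in>{1..m}. \<sigma> i \<ge> 0) \<and> (\<Sum>i=1..m. \<sigma> i) / real m - 1 \<ge> 0 \<and>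
     cont_q q \<alpha> \<and> rad_unb_q q \<alpha> \<and> pos_def_q q \<alpha> \<and>
     (if q = 0 then
        (\<forall>x0. V x0 (\<lambda>_. 0) \<ge> \<alpha> x0 (\<lambda>_. 0)) \<and>
        (\<forall>x0\<in>X. \<exists>\<nu>. feasU f X U m x0 \<nu> \<and>
            (\<Sum>i=1..m. \<sigma> i * V (traj f x0 \<nu> i) (\<lambda>_. 0)) / real m - V x0 (\<lambda>_. 0)
              \<le> - \<alpha> x0 (\<lambda>_. 0))
      else
        (\<forall>x0 u. u \<in> qseqs q \<and> feasU f X U q x0 u \<longrightarrow> V x0 u \<ge> \<alpha> x0 u) \<and>
        (\<forall>x0 u. u \<in> qseqs q \<and> feasU f X U q x0 u \<longrightarrow>
           (\<exists>\<nu>. (\<forall>l\<le>m. feasU f X U q (traj f x0 \<nu> l) (seg q l \<nu>)) \<and>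
              (\<Sum>i=1..m. \<sigma> i * V (traj f x0 \<nu> i) (seg q i \<nu>)) / real m - V x0 u
                \<le> - \<alpha> x0 u)))"

end

theory Submission
  imports Defs
begin

text \<open>The decrease condition of a g-dclf bounds a weighted average of the values
  of \<open>V\<close> at the next \<open>m\<close> states (with their shifted input windows) by
  \<open>V(x\<^sup>0, u) - \<alpha>(x\<^sup>0, u)\<close>. These values are nonnegative and the weights
  average at least 1, so the smallest of them obeys the same bound; the step \<open>l\<close>
  attaining it is the one sought.\<close>

lemma weighted_sum_le_imp_ex_le:
  fixes \<sigma> W :: "'a \<Rightarrow> real"
  assumes "finite A" and "A \<noteq> {}"
    and "\<And>i. i \<in> A \<Longrightarrow> \<sigma> i \<ge> 0" and "real (card A) \<le> sum \<sigma> A"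
    and "\<And>i. i \<in> A \<Longrightarrow> W i \<ge> 0"
    and "(\<Sum>i\<in>A. \<sigma> i * W i) \<le> real (card A) * c"
  shows "\<exists>i\<in>A. W i \<le> c"
proof -
  obtain k where k: "k \<in> A" "\<And>i. i \<in> A \<Longrightarrow> W k \<le> W i"
    using arg_min_if_finite(1) arg_min_least assms(1,2) by metis
  have "real (card A) * W k \<le> sum \<sigma> A * W k"
    using assms(4,5) k(1) by (intro mult_right_mono) auto
  also have "\<dots> = (\<Sum>i\<in>A. \<sigma> i * W k)"
    by (simp add: sum_distrib_right)
  also have "\<dots> \<le> (\<Sum>i\<in>A. \<sigma> i * W i)"
    using assms(3) k(2) by (intro sum_mono mult_left_mono) auto
  also have "\<dots> \<le> real (card A) * c"
    by (fact assms(6))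
  finally have "W k \<le> c"
    using assms(1,2) by (simp add: card_gt_0_iff)
  with k(1) show ?thesis ..
qed

lemma seg_in_qseqs: "seg q l \<nu> \<in> qseqs q"
  by (simp add: seg_def qseqs_def)

lemma seg_0: "seg 0 l \<nu> = (\<lambda>_. 0)"
  by (simp add: seg_def)

lemma qseqs_0: "u \<in> qseqs 0 \<longleftrightarrow> u = (\<lambda>_. 0)"
  by (auto simp: qseqs_def)

lemma feasU_0: "feasU f X U 0 x u \<longleftrightarrow> x \<in> X"
  by (simp add: feasU_def)

lemma feasU_traj_in: "feasU f X U N x \<nu> \<Longrightarrow> l \<le> N \<Longrightarrow> traj f x \<nu> l \<in> X"
  by (cases l) (auto simp: feasU_def)

lemma pos_def_q_nonneg: "pos_def_q q g \<Longrightarrow> u \<in> qseqs q \<Longrightarrow> g x u \<ge> 0"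
  by (auto simp: pos_def_q_def dom_q_def)

text \<open>For \<open>q = 0\<close> all input segments are the zero sequence, so both branches of
  the definition of a g-dclf yield the same decrease condition.\<close>

lemma gdclf_decrease:
  assumes "gdclf f X U q m V \<alpha> \<sigma>" and "u \<in> qseqs q" and "feasU f X U q x0 u"
  shows "\<exists>\<nu>. (\<forall>l\<le>m. feasU f X U q (traj f x0 \<nu> l) (seg q l \<nu>)) \<and>
           (\<Sum>i=1..m. \<sigma> i * V (traj f x0 \<nu> i) (seg q i \<nu>)) / real m - V x0 u
             \<le> - \<alpha> x0 u"
proof (cases "q = 0")
  case True
  have "x0 \<in> X" and "u = (\<lambda>_. 0)"
    using assms(2,3) True by (simp_all add: feasU_0 qseqs_0)
  then obtain \<nu> where "feasU f X U m x0 \<nu>" and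
    "(\<Sum>i=1..m. \<sigma> i * V (traj f x0 \<nu> i) (\<lambda>_. 0)) / real m - V x0 u \<le> - \<alpha> x0 u"
    using assms(1) True by (auto simp: gdclf_def)
  then show ?thesis
    using True by (auto simp: seg_0 feasU_0 intro: feasU_traj_in)
next
  case False
  then show ?thesis
    using assms by (auto simp: gdclf_def)
qed

theorem proposition3p1:
  fixes f :: "real^'n \<Rightarrow> real^'p \<Rightarrow> real^'n"
    and X :: "(real^'n) set" and U :: "(real^'p) set"
    and q m :: nat
    and V \<alpha> :: "real^'n \<Rightarrow> (nat \<Rightarrow> real^'p) \<Rightarrow> real"
    and \<sigma> :: "nat \<Rightarrow> real"
  assumes "0 \<in> interior X" and "0 \<in> interior U"
    and "continuous_on (X \<times> U) (\<lambda>(x,u). f x u)" and "f 0 0 = 0"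
    and "gdclf f X U q m V \<alpha> \<sigma>"
    and "u \<in> qseqs q" and "feasU f X U q x0 u"
  shows "\<exists>\<nu>. \<exists>l\<in>{1..m}.
           V (traj f x0 \<nu> l) (seg q l \<nu>) - V x0 u \<le> - \<alpha> x0 u \<and>
           feasU f X U q (traj f x0 \<nu> l) (seg q l \<nu>)"
proof -
  have m: "m \<ge> 1" and "pos_def_q q V" and \<sigma>_nonneg: "\<forall>i\<in>{1..m}. \<sigma> i \<ge> 0"
    and "(\<Sum>i=1..m. \<sigma> i) / real m - 1 \<ge> 0"
    using assms(5) by (simp_all add: gdclf_def)
  then have \<sigma>_sum: "real (card {1..m}) \<le> (\<Sum>i=1..m. \<sigma> i)"
    by (simp add: field_simps)
  have V_nonneg: "V x (seg q l \<nu>) \<ge> 0" for x l \<nu>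
    using \<open>pos_def_q q V\<close> by (simp add: pos_def_q_nonneg seg_in_qseqs)
  obtain \<nu> where feas: "\<forall>l\<le>m. feasU f X U q (traj f x0 \<nu> l) (seg q l \<nu>)"
    and decrease: "(\<Sum>i=1..m. \<sigma> i * V (traj f x0 \<nu> i) (seg q i \<nu>))
                     \<le> real (card {1..m}) * (V x0 u - \<alpha> x0 u)"
    using gdclf_decrease[OF assms(5-7)] m by (auto simp: field_simps)
  obtain l where l: "l \<in> {1..m}" "V (traj f x0 \<nu> l) (seg q l \<nu>) \<le> V x0 u - \<alpha> x0 u"
    using weighted_sum_le_imp_ex_le[OF _ _ _ \<sigma>_sum _ decrease] m \<sigma>_nonneg V_nonneg by auto
  with feas show ?thesis
    by (intro exI[of _ \<nu>] bexI[of _ l]) auto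
qed

end
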